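(* Let $K$ be an algebraic number field and $J\subseteq\mathcal O_K$ a nonzero ideal. Then the action of $\mathcal O_K^*$ on $\hat J$ has the ID property if and only if the action of $\mathcal O_K^*$ on $\widehat{\mathcal O_K}$ has the ID property.
   Context: $\mathcal O_K$ is the ring of integers of $K$, $\mathcal O_K^*$ its unit group. For a nonzero ideal $J$, $\hat J$ is the Pontryagin dual of the additive group $J$, with $\mathcal O_K^*$ acting by $(u\cdot\chi)(j)=\chi(uj)$. An action of a group $G$ on a compact space $X$ by homeomorphisms has the ID (infinite invariant dense) property if the only closed infinite $G$-invariant subset of $X$ is $X$ itself. *)

theory Defs
  imports "HOL-Analysis.Analysis" "HOL-Computational_Algebra.Polynomial"
begin

text \<open>An algebraic number field, realised (via an embedding) as a subfield of the
complex numbers which is a finite-dimensional vector space over the rationals.\<close>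
definition number_field :: "complex set \<Rightarrow> bool" where
  "number_field K \<longleftrightarrow>
     0 \<in> K \<and> 1 \<in> K \<and>
     (\<forall>x\<in>K. \<forall>y\<in>K. x + y \<in> K \<and> x * y \<in> K) \<and>
     (\<forall>x\<in>K. - x \<in> K \<and> inverse x \<in> K) \<and>
     (\<exists>B. finite B \<and> B \<subseteq> K \<and>
        (\<forall>x\<in>K. \<exists>c. (\<forall>b\<in>B. c b \<in> \<rat>) \<and> x = (\<Sum>b\<in>B. c b * b)))"

definition ring_of_integers :: "complex set \<Rightarrow> complex set" where
  "ring_of_integers K = {x \<in> K. algebraic_int x}"

definition int_units :: "complex set \<Rightarrow> complex set" where
  "int_units K = {u \<in> ring_of_integers K. \<exists>v \<in> ring_of_integers K. u * v = 1}"

definition is_ideal :: "complex set \<Rightarrow> complex set \<Rightarrow> bool" where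
  "is_ideal R J \<longleftrightarrow> J \<subseteq> R \<and> 0 \<in> J \<and>
     (\<forall>x\<in>J. \<forall>y\<in>J. x + y \<in> J) \<and> (\<forall>x\<in>J. - x \<in> J) \<and>
     (\<forall>r\<in>R. \<forall>x\<in>J. r * x \<in> J)"

text \<open>Pontryagin dual of the (discrete) additive group J: characters J \<rightarrow> unit circle,
extended by the value 1 outside J.  Its topology (compact-open = pointwise convergence,
J being discrete) is the subspace topology of the product topology on complex \<Rightarrow> complex.\<close>
definition dual_group :: "complex set \<Rightarrow> (complex \<Rightarrow> complex) set" where
  "dual_group J = {ch. (\<forall>x\<in>J. norm (ch x) = 1) \<and>
                        (\<forall>x\<in>J. \<forall>y\<in>J. ch (x + y) = ch x * ch y) \<and>
                        (\<forall>x. x \<notin> J \<longrightarrow> ch x = 1)}"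

definition dual_act :: "complex \<Rightarrow> (complex \<Rightarrow> complex) \<Rightarrow> (complex \<Rightarrow> complex)" where
  "dual_act u ch = (\<lambda>j. ch (u * j))"

definition ID_property ::
  "'b topology \<Rightarrow> 'g set \<Rightarrow> ('g \<Rightarrow> 'b \<Rightarrow> 'b) \<Rightarrow> bool" where
  "ID_property T G act \<longleftrightarrow>
     (\<forall>S. closedin T S \<and> infinite S \<and> (\<forall>g\<in>G. \<forall>x\<in>S. act g x \<in> S)
          \<longrightarrow> S = topspace T)"

end

theory Submission
  imports Defs "Jordan_Normal_Form.Char_Poly" "HOL-Computational_Algebra.Fundamental_Theorem_Algebra"
begin

text \<open>
  Pick \<open>a \<noteq> 0\<close> in \<open>J\<close>, so that \<open>a \<O>\<^sub>K \<subseteq> J \<subseteq> \<O>\<^sub>K\<close>. Restricting characters from \<open>\<O>\<^sub>K\<close> to \<open>J\<close>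
  and sending \<open>\<chi> \<in> \<hat>J\<close> to \<open>x \<mapsto> \<chi>(a x)\<close> give continuous \<open>\<O>\<^sub>K\<^sup>*\<close>-equivariant maps
  \<open>\<hat>\<O>\<^sub>K \<rightarrow> \<hat>J\<close> and \<open>\<hat>J \<rightarrow> \<hat>\<O>\<^sub>K\<close>. Both are surjective, because the circle group is divisible,
  so that characters of a subgroup extend to the whole group (Zorn's lemma). Finally, the ID
  property passes to equivariant continuous images: the preimage of a closed infinite invariant
  subset of the image is closed, infinite and invariant.

  Along the way, \<open>\<O>\<^sub>K\<close> must be shown to be a ring: algebraic integers are closed under sums
  and products, since an element stabilising a nonzero finitely generated \<open>\<int>\<close>-module is
  a root of the characteristic polynomial of an integer matrix.
\<close>

definition int_span :: "'i set \<Rightarrow> ('i \<Rightarrow> complex) \<Rightarrow> complex set" where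
  "int_span I g = {s. \<exists>c. s = (\<Sum>j\<in>I. of_int (c j) * g j)}"

lemma int_span_0: "0 \<in> int_span I g"
  unfolding int_span_def by (intro CollectI exI[of _ "\<lambda>_. 0"]) simp

lemma int_span_add: "s \<in> int_span I g \<Longrightarrow> t \<in> int_span I g \<Longrightarrow> s + t \<in> int_span I g"
proof -
  assume "s \<in> int_span I g" "t \<in> int_span I g"
  then obtain c d where "s = (\<Sum>j\<in>I. of_int (c j) * g j)" "t = (\<Sum>j\<in>I. of_int (d j) * g j)"
    unfolding int_span_def by blast
  hence "s + t = (\<Sum>j\<in>I. of_int (c j + d j) * g j)" by (simp add: distrib_right sum.distrib)
  thus ?thesis unfolding int_span_def by (intro CollectI exI[of _ "\<lambda>j. c j + d j"])
qed

lemma int_span_of_int_mult: "s \<in> int_span I g \<Longrightarrow> of_int k * s \<in> int_span I g"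
proof -
  assume "s \<in> int_span I g"
  then obtain c where "s = (\<Sum>j\<in>I. of_int (c j) * g j)" unfolding int_span_def by blast
  hence "of_int k * s = (\<Sum>j\<in>I. of_int (k * c j) * g j)" by (simp add: sum_distrib_left mult.assoc)
  thus ?thesis unfolding int_span_def by (intro CollectI exI[of _ "\<lambda>j. k * c j"])
qed

lemma int_span_sum: "finite A \<Longrightarrow> (\<And>j. j \<in> A \<Longrightarrow> f j \<in> int_span I g) \<Longrightarrow> sum f A \<in> int_span I g"
  by (induction A rule: finite_induct) (auto simp: int_span_0 int_span_add)

lemma int_span_generator:
  assumes "finite I" "i \<in> I"
  shows "g i \<in> int_span I g"
proof -
  have "(\<Sum>j\<in>I. of_int (if j = i then 1 else 0) * g j) = (\<Sum>j\<in>I. if j = i then g j else 0)"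
    by (intro sum.cong) auto
  also have "\<dots> = g i" using assms by simp
  finally show ?thesis unfolding int_span_def by (intro CollectI exI[of _ "\<lambda>j. if j = i then 1 else 0"]) simp
qed

lemma int_span_mult:
  assumes "s \<in> int_span A f" "t \<in> int_span B h" "finite A" "finite B"
  shows "s * t \<in> int_span (A \<times> B) (\<lambda>(a, b). f a * h b)"
proof -
  obtain c d where "s = (\<Sum>a\<in>A. of_int (c a) * f a)" "t = (\<Sum>b\<in>B. of_int (d b) * h b)"
    using assms(1,2) unfolding int_span_def by blast
  hence "s * t = (\<Sum>(a, b)\<in>A \<times> B. of_int (c a * d b) * (f a * h b))"
    by (simp add: sum_product sum.cartesian_product mult_ac)
  thus ?thesis unfolding int_span_def
    by (intro CollectI exI[of _ "\<lambda>(a, b). c a * d b"]) (simp add: case_prod_unfold)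
qed

lemma int_span_mult_stable:
  assumes "finite I" "\<And>i. i \<in> I \<Longrightarrow> x * g i \<in> int_span I g" "s \<in> int_span I g"
  shows "x * s \<in> int_span I g"
proof -
  obtain c where "s = (\<Sum>j\<in>I. of_int (c j) * g j)" using assms(3) unfolding int_span_def by blast
  hence "x * s = (\<Sum>j\<in>I. of_int (c j) * (x * g j))" by (simp add: sum_distrib_left mult.left_commute)
  also have "\<dots> \<in> int_span I g" using assms(1,2) by (intro int_span_sum int_span_of_int_mult)
  finally show ?thesis .
qed

lemma algebraic_int_of_int_eigenvector:
  fixes x :: complex and g :: "nat \<Rightarrow> complex" and A :: "nat \<Rightarrow> nat \<Rightarrow> int"
  assumes "i0 < n" "g i0 \<noteq> 0"
    and eigen: "\<And>i. i < n \<Longrightarrow> x * g i = (\<Sum>j<n. of_int (A i j) * g j)"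
  shows "algebraic_int x"
proof -
  define B :: "int mat" where "B = mat n n (\<lambda>(i, j). A i j)"
  have B: "B \<in> carrier_mat n n" by (simp add: B_def)
  define Bc :: "complex mat" where "Bc = of_int_hom.mat_hom B"
  have Bc: "Bc \<in> carrier_mat n n" using B by (simp add: Bc_def)
  define v where "v = vec n g"
  have "Bc *\<^sub>v v = x \<cdot>\<^sub>v v"
  proof (rule eq_vecI)
    fix i assume "i < dim_vec (x \<cdot>\<^sub>v v)"
    hence i: "i < n" by (simp add: v_def)
    have "(Bc *\<^sub>v v) $ i = (\<Sum>j<n. of_int (A i j) * g j)"
      using i Bc by (auto simp: scalar_prod_def v_def Bc_def B_def atLeast0LessThan intro!: sum.cong)
    thus "(Bc *\<^sub>v v) $ i = (x \<cdot>\<^sub>v v) $ i" using eigen[OF i] i by (simp add: v_def)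
  qed (use Bc in \<open>auto simp: v_def\<close>)
  moreover have "v \<in> carrier_vec n" "v \<noteq> 0\<^sub>v n"
    using assms(1,2) by (auto simp: v_def) (metis index_vec index_zero_vec(1))
  ultimately have "eigenvalue Bc x"
    using Bc unfolding eigenvalue_def eigenvector_def by auto
  hence "poly (of_int_poly (char_poly B)) x = 0"
    using eigenvalue_root_char_poly[OF Bc] unfolding Bc_def of_int_hom.char_poly_hom[OF B] by simp
  moreover have "monic (char_poly B)" using degree_monic_char_poly[OF B] by simp
  ultimately show ?thesis by (auto simp: algebraic_int_altdef_ipoly)
qed

lemma algebraic_int_of_stable_int_span:
  fixes x :: complex
  assumes I: "finite I" and "i0 \<in> I" "g i0 \<noteq> 0"
    and stable: "\<And>i. i \<in> I \<Longrightarrow> x * g i \<in> int_span I g"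
  shows "algebraic_int x"
proof -
  obtain h where h: "bij_betw h {..<card I} I" using ex_bij_betw_nat_finite[OF I]
    by (auto simp: atLeast0LessThan)
  have "\<exists>c. x * g (h i) = (\<Sum>j\<in>I. of_int (c j) * g j)" if "i < card I" for i
    using stable[of "h i"] bij_betwE[OF h] that unfolding int_span_def by blast
  then obtain c where c: "\<And>i. i < card I \<Longrightarrow> x * g (h i) = (\<Sum>j\<in>I. of_int (c i j) * g j)"
    by metis
  obtain k0 where k0: "k0 < card I" "h k0 = i0"
    using \<open>i0 \<in> I\<close> bij_betw_imp_surj_on[OF h] by force
  show ?thesis
  proof (rule algebraic_int_of_int_eigenvector[of k0 "card I" "g \<circ> h" x "\<lambda>i j. c i (h j)"])
    fix i assume "i < card I"
    thus "x * (g \<circ> h) i = (\<Sum>j<card I. of_int (c i (h j)) * (g \<circ> h) j)"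
      using c sum.reindex_bij_betw[OF h, of "\<lambda>j. of_int (c i j) * g j"] by simp
  qed (use k0 \<open>g i0 \<noteq> 0\<close> in auto)
qed

lemma monic_root_power_in_int_span:
  fixes p :: "int poly" and x :: complex
  assumes "monic p" "poly (of_int_poly p) x = 0" "i \<le> degree p"
  shows "x ^ i \<in> int_span {..<degree p} (\<lambda>k. x ^ k)"
proof (cases "i < degree p")
  case True
  thus ?thesis by (simp add: int_span_generator)
next
  case False
  hence i: "i = degree p" using assms(3) by simp
  have "0 = (\<Sum>k\<le>degree p. of_int (coeff p k) * x ^ k)"
    using assms(2) by (simp add: poly_altdef)
  also have "\<dots> = (\<Sum>k<degree p. of_int (coeff p k) * x ^ k) + x ^ degree p"
    using assms(1) by (simp add: lessThan_Suc_atMost[symmetric])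
  finally have "x ^ i = (\<Sum>k<degree p. of_int (- coeff p k) * x ^ k)"
    by (simp add: i sum_negf eq_neg_iff_add_eq_0 add.commute)
  thus ?thesis unfolding int_span_def by (intro CollectI exI[of _ "\<lambda>k. - coeff p k"])
qed

lemma monic_root_degree_pos:
  fixes p :: "int poly" and x :: complex
  assumes "monic p" "poly (of_int_poly p) x = 0"
  shows "degree p > 0"
proof (rule ccontr)
  assume "\<not> degree p > 0"
  hence "p = 1" using assms(1) by (metis degree_0_id neq0_conv one_pCons)
  thus False using assms(2) by simp
qed

lemma algebraic_int_common_stable_int_span:
  fixes x y :: complex
  assumes "algebraic_int x" "algebraic_int y"
  obtains I :: "(nat \<times> nat) set" and g i0 where "finite I" "i0 \<in> I" "g i0 \<noteq> 0"
    "\<And>i. i \<in> I \<Longrightarrow> x * g i \<in> int_span I g" "\<And>i. i \<in> I \<Longrightarrow> y * g i \<in> int_span I g"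
proof -
  obtain p where p: "monic p" "poly (of_int_poly p) x = 0"
    using assms(1) by (auto simp: algebraic_int_altdef_ipoly)
  obtain q where q: "monic q" "poly (of_int_poly q) y = 0"
    using assms(2) by (auto simp: algebraic_int_altdef_ipoly)
  define I where "I = {..<degree p} \<times> {..<degree q}"
  define g where "g = (\<lambda>(i, j). x ^ i * y ^ j)"
  have span: "s * t \<in> int_span I g"
    if "s \<in> int_span {..<degree p} ((^) x)" "t \<in> int_span {..<degree q} ((^) y)" for s t
    using int_span_mult[OF that] unfolding I_def g_def by simp
  have x: "x * g (i, j) \<in> int_span I g" and y: "y * g (i, j) \<in> int_span I g"
    if "(i, j) \<in> I" for i j
  proof -
    have i: "i < degree p" and j: "j < degree q" using that by (auto simp: I_def)
    have "x ^ Suc i * y ^ j \<in> int_span I g"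
      using i j by (intro span monic_root_power_in_int_span[OF p] monic_root_power_in_int_span[OF q]) auto
    moreover have "x ^ i * y ^ Suc j \<in> int_span I g"
      using i j by (intro span monic_root_power_in_int_span[OF p] monic_root_power_in_int_span[OF q]) auto
    ultimately show "x * g (i, j) \<in> int_span I g" "y * g (i, j) \<in> int_span I g"
      by (simp_all add: g_def mult_ac)
  qed
  have "(0, 0) \<in> I" using monic_root_degree_pos p q by (simp add: I_def)
  moreover have "g (0, 0) \<noteq> 0" by (simp add: g_def)
  ultimately show ?thesis using that[of I "(0, 0)" g] x y unfolding I_def by blast
qed

lemma algebraic_int_add:
  fixes x y :: complex
  assumes "algebraic_int x" "algebraic_int y"
  shows "algebraic_int (x + y)"
proof -
  obtain I :: "(nat \<times> nat) set" and g i0 where I: "finite I" "i0 \<in> I" "g i0 \<noteq> 0"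
    and x: "\<And>i. i \<in> I \<Longrightarrow> x * g i \<in> int_span I g" and y: "\<And>i. i \<in> I \<Longrightarrow> y * g i \<in> int_span I g"
    using algebraic_int_common_stable_int_span[OF assms] by metis
  have "(x + y) * g i \<in> int_span I g" if "i \<in> I" for i
    using int_span_add[OF x[OF that] y[OF that]] by (simp add: distrib_right)
  thus ?thesis by (rule algebraic_int_of_stable_int_span[of I i0 g, OF I])
qed

lemma algebraic_int_mult:
  fixes x y :: complex
  assumes "algebraic_int x" "algebraic_int y"
  shows "algebraic_int (x * y)"
proof -
  obtain I :: "(nat \<times> nat) set" and g i0 where I: "finite I" "i0 \<in> I" "g i0 \<noteq> 0"
    and x: "\<And>i. i \<in> I \<Longrightarrow> x * g i \<in> int_span I g" and y: "\<And>i. i \<in> I \<Longrightarrow> y * g i \<in> int_span I g"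
    using algebraic_int_common_stable_int_span[OF assms] by metis
  have "(x * y) * g i \<in> int_span I g" if "i \<in> I" for i
    using int_span_mult_stable[OF I(1) x y[OF that]] by (simp add: mult.assoc)
  thus ?thesis by (rule algebraic_int_of_stable_int_span[of I i0 g, OF I])
qed

definition add_subgroup :: "complex set \<Rightarrow> bool" where
  "add_subgroup A \<longleftrightarrow> 0 \<in> A \<and> (\<forall>x\<in>A. \<forall>y\<in>A. x + y \<in> A) \<and> (\<forall>x\<in>A. - x \<in> A)"

definition is_character :: "complex set \<Rightarrow> (complex \<Rightarrow> complex) \<Rightarrow> bool" where
  "is_character A f \<longleftrightarrow> (\<forall>x\<in>A. norm (f x) = 1) \<and> (\<forall>x\<in>A. \<forall>y\<in>A. f (x + y) = f x * f y)"

lemma add_subgroup_of_nat_mult: "add_subgroup A \<Longrightarrow> x \<in> A \<Longrightarrow> of_nat n * x \<in> A"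
  by (induction n) (auto simp: add_subgroup_def distrib_right)

lemma add_subgroup_of_int_mult:
  assumes "add_subgroup A" "x \<in> A"
  shows "of_int k * x \<in> A"
proof (cases "k \<ge> 0")
  case True
  thus ?thesis using add_subgroup_of_nat_mult[OF assms, of "nat k"] by simp
next
  case False
  hence "of_int k * x = - (of_nat (nat (- k)) * x)" by simp
  thus ?thesis using add_subgroup_of_nat_mult[OF assms] assms(1) by (simp add: add_subgroup_def)
qed

lemma add_subgroup_image_mult: "add_subgroup A \<Longrightarrow> add_subgroup ((*) a ` A)"
  unfolding add_subgroup_def by (auto simp: image_iff) (metis distrib_left, metis mult_minus_right)

lemma is_character_0: "add_subgroup A \<Longrightarrow> is_character A f \<Longrightarrow> f 0 = 1"
  unfolding add_subgroup_def is_character_def by (metis add_0 mult_cancel_left1 norm_zero zero_neq_one)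

lemma is_character_uminus:
  assumes "add_subgroup A" "is_character A f" "x \<in> A"
  shows "f (- x) = inverse (f x)"
proof -
  have "f x * f (- x) = f (x + - x)" using assms unfolding add_subgroup_def is_character_def by metis
  also have "\<dots> = 1" using is_character_0[OF assms(1,2)] by simp
  finally show ?thesis by (rule inverse_unique[symmetric])
qed

lemma is_character_of_nat_mult:
  assumes "add_subgroup A" "is_character A f" "x \<in> A"
  shows "f (of_nat n * x) = f x ^ n"
proof (induction n)
  case 0
  thus ?case using is_character_0[OF assms(1,2)] by simp
next
  case (Suc n)
  have "f (of_nat (Suc n) * x) = f (x + of_nat n * x)" by (simp add: distrib_right)
  also have "\<dots> = f x * f (of_nat n * x)"
    using assms add_subgroup_of_nat_mult[OF assms(1,3)] by (simp add: is_character_def)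
  finally show ?case using Suc by simp
qed

lemma is_character_of_int_mult:
  assumes "add_subgroup A" "is_character A f" "x \<in> A"
  shows "f (of_int k * x) = f x powi k"
proof (cases "k \<ge> 0")
  case True
  thus ?thesis using is_character_of_nat_mult[OF assms, of "nat k"] by (simp add: power_int_def)
next
  case False
  hence "f (of_int k * x) = f (- (of_nat (nat (- k)) * x))" by simp
  also have "\<dots> = inverse (f x ^ nat (- k))"
    using is_character_uminus[OF assms(1,2) add_subgroup_of_nat_mult[OF assms(1,3)]]
      is_character_of_nat_mult[OF assms] by simp
  finally show ?thesis using False by (simp add: power_int_def power_inverse)
qed

lemma add_subgroup_int_multiples:
  assumes "add_subgroup D"
  obtains n :: nat where "\<And>k. of_int k * g \<in> D \<longleftrightarrow> int n dvd k"
proof (cases "\<exists>n>0. of_nat n * g \<in> D")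
  case False
  have "of_int k * g \<in> D \<longleftrightarrow> k = 0" for k
  proof
    assume k: "of_int k * g \<in> D"
    have "of_int (- k) * g \<in> D" using add_subgroup_of_int_mult[OF assms k, of "- 1"] by simp
    thus "k = 0" using k False by (cases "k \<ge> 0") (auto dest: spec[of _ "nat \<bar>k\<bar>"])
  qed (use assms in \<open>simp add: add_subgroup_def\<close>)
  thus ?thesis using that[of 0] by simp
next
  case True
  define n where "n = (LEAST n. n > 0 \<and> of_nat n * g \<in> D)"
  have n: "n > 0" "of_nat n * g \<in> D" using LeastI_ex[OF True] unfolding n_def by auto
  have n_min: "n \<le> m" if "0 < m" "of_nat m * g \<in> D" for m
    using Least_le[of "\<lambda>n. n > 0 \<and> of_nat n * g \<in> D" m] that unfolding n_def by blast
  have "of_int k * g \<in> D \<longleftrightarrow> int n dvd k" for k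
  proof
    assume k: "of_int k * g \<in> D"
    have "(of_int k :: complex) = of_int (k div int n) * of_nat n + of_int (k mod int n)"
      by (metis div_mult_mod_eq of_int_add of_int_mult of_int_of_nat_eq)
    hence "of_int (k mod int n) * g = of_int k * g + of_int (- (k div int n)) * (of_nat n * g)"
      by (simp add: algebra_simps)
    also have "\<dots> \<in> D"
      using assms k add_subgroup_of_int_mult[OF assms n(2), of "- (k div int n)"]
      unfolding add_subgroup_def by blast
    finally have "of_nat (nat (k mod int n)) * g \<in> D" using n(1) by simp
    moreover have r: "0 \<le> k mod int n" "k mod int n < int n" using n(1) by simp_all
    hence "nat (k mod int n) < n" by linarith
    ultimately have "nat (k mod int n) = 0" using n_min[of "nat (k mod int n)"] by linarith
    thus "int n dvd k" using r by (simp add: dvd_eq_mod_eq_0)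
  next
    assume "int n dvd k"
    then obtain j where "k = int n * j" by blast
    thus "of_int k * g \<in> D" using add_subgroup_of_int_mult[OF assms n(2), of j] by (simp add: mult_ac)
  qed
  thus ?thesis using that by blast
qed

text \<open>This is where the divisibility of the circle group enters: it lets a character be extended by one element.\<close>
lemma is_character_cyclic_root:
  assumes D: "add_subgroup D" and \<psi>: "is_character D \<psi>"
  obtains z where "norm z = 1" "\<And>k. of_int k * g \<in> D \<Longrightarrow> \<psi> (of_int k * g) = z powi k"
proof -
  obtain n where n: "\<And>k. of_int k * g \<in> D \<longleftrightarrow> int n dvd k"
    using add_subgroup_int_multiples[OF D, where g = g] by blast
  show ?thesis
  proof (cases "n = 0")
    case True
    thus ?thesis using that[of 1] n is_character_0[OF D \<psi>] by simp
  next
    case False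
    have ng: "of_nat n * g \<in> D" using n[of "int n"] by simp
    obtain z where z: "z ^ n = \<psi> (of_nat n * g)" using nth_root_exists False by blast
    have "norm z ^ n = 1 ^ n" using z \<psi> ng unfolding is_character_def by (metis norm_power power_one)
    hence "norm z = 1" using power_eq_imp_eq_base[of "norm z" n 1] False by simp
    moreover have "\<psi> (of_int k * g) = z powi k" if kg: "of_int k * g \<in> D" for k
    proof -
      obtain j where k: "k = int n * j" using n kg by blast
      have "\<psi> (of_int k * g) = \<psi> (of_int j * (of_nat n * g))" by (simp add: k mult_ac)
      also have "\<dots> = (z powi int n) powi j"
        using is_character_of_int_mult[OF D \<psi> ng] z by (simp add: power_int_of_nat)
      finally show ?thesis by (simp add: k power_int_mult)
    qed
    ultimately show ?thesis using that by blast
  qed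
qed

text \<open>
  A partial character is handled through its graph, so that Zorn's lemma applies to sets of
  pairs ordered by inclusion; the closure conditions make the union of a chain a graph again.
\<close>
definition char_graph :: "complex set \<Rightarrow> (complex \<times> complex) set \<Rightarrow> bool" where
  "char_graph G F \<longleftrightarrow> single_valued F \<and> Domain F \<subseteq> G \<and> (\<forall>p\<in>F. norm (snd p) = 1) \<and>
     (\<forall>p\<in>F. \<forall>q\<in>F. (fst p + fst q, snd p * snd q) \<in> F) \<and> (\<forall>x\<in>Domain F. - x \<in> Domain F)"

definition graph_fun :: "('a \<times> 'b) set \<Rightarrow> 'a \<Rightarrow> 'b" where
  "graph_fun F x = (SOME w. (x, w) \<in> F)"

lemma graph_fun_mem: "x \<in> Domain F \<Longrightarrow> (x, graph_fun F x) \<in> F"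
  unfolding graph_fun_def by (meson DomainE someI)

lemma graph_fun_eq: "single_valued F \<Longrightarrow> (x, w) \<in> F \<Longrightarrow> graph_fun F x = w"
  using graph_fun_mem single_valuedD by fastforce

lemma char_graph_Union:
  assumes "C \<noteq> {}" "\<And>F. F \<in> C \<Longrightarrow> char_graph G F"
    and chain: "\<And>F F'. F \<in> C \<Longrightarrow> F' \<in> C \<Longrightarrow> F \<subseteq> F' \<or> F' \<subseteq> F"
  shows "char_graph G (\<Union>C)"
proof -
  have two: "\<exists>F\<in>C. p \<in> F \<and> q \<in> F" if "p \<in> \<Union>C" "q \<in> \<Union>C" for p q
    using that chain by blast
  show ?thesis
    unfolding char_graph_def
  proof (intro conjI ballI)
    show "single_valued (\<Union>C)"
      using two assms(2) unfolding single_valued_def char_graph_def by metis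
    show "Domain (\<Union>C) \<subseteq> G" using assms(2) unfolding char_graph_def by blast
    show "norm (snd p) = 1" if "p \<in> \<Union>C" for p using that assms(2) unfolding char_graph_def by blast
    show "(fst p + fst q, snd p * snd q) \<in> \<Union>C" if "p \<in> \<Union>C" "q \<in> \<Union>C" for p q
      using two[OF that] assms(2) unfolding char_graph_def by blast
    show "- x \<in> Domain (\<Union>C)" if "x \<in> Domain (\<Union>C)" for x
      using that assms(2) unfolding char_graph_def by blast
  qed
qed

lemma char_graph_character:
  assumes "char_graph G F" "Domain F \<noteq> {}"
  shows "add_subgroup (Domain F)" "is_character (Domain F) (graph_fun F)"
proof -
  have cl: "(x + y, graph_fun F x * graph_fun F y) \<in> F" if "x \<in> Domain F" "y \<in> Domain F" for x y
    using assms(1) graph_fun_mem[OF that(1)] graph_fun_mem[OF that(2)] unfolding char_graph_def by force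
  obtain x where "x \<in> Domain F" using assms(2) by blast
  hence "x + - x \<in> Domain F" using cl assms(1) unfolding char_graph_def by blast
  thus "add_subgroup (Domain F)"
    using cl assms(1) unfolding add_subgroup_def char_graph_def by force
  show "is_character (Domain F) (graph_fun F)"
    unfolding is_character_def
  proof (intro conjI ballI)
    fix x assume x: "x \<in> Domain F"
    show "norm (graph_fun F x) = 1" using graph_fun_mem[OF x] assms(1) unfolding char_graph_def by force
    fix y assume "y \<in> Domain F"
    have "single_valued F" using assms(1) by (simp add: char_graph_def)
    thus "graph_fun F (x + y) = graph_fun F x * graph_fun F y"
      by (rule graph_fun_eq[OF _ cl[OF x \<open>y \<in> Domain F\<close>]])
  qed
qed

definition adjoin_graph :: "(complex \<times> complex) set \<Rightarrow> complex \<Rightarrow> complex \<Rightarrow> (complex \<times> complex) set" where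
  "adjoin_graph F g z = {(d + of_int k * g, w * z powi k) | d w k. (d, w) \<in> F}"

lemma subset_adjoin_graph: "F \<subseteq> adjoin_graph F g z"
  unfolding adjoin_graph_def by force

lemma single_valued_adjoin_graph:
  assumes F: "char_graph G F" and "z \<noteq> 0"
    and compat: "\<And>k. of_int k * g \<in> Domain F \<Longrightarrow> (of_int k * g, z powi k) \<in> F"
  shows "single_valued (adjoin_graph F g z)"
  unfolding single_valued_def
proof (intro allI impI)
  fix x y y' assume "(x, y) \<in> adjoin_graph F g z" "(x, y') \<in> adjoin_graph F g z"
  then obtain d1 w1 k1 d2 w2 k2 where e: "x = d1 + of_int k1 * g" "y = w1 * z powi k1" "(d1, w1) \<in> F"
    "x = d2 + of_int k2 * g" "y' = w2 * z powi k2" "(d2, w2) \<in> F"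
    unfolding adjoin_graph_def by blast
  have cl: "\<And>p q. p \<in> F \<Longrightarrow> q \<in> F \<Longrightarrow> (fst p + fst q, snd p * snd q) \<in> F"
    and neg: "\<And>x. x \<in> Domain F \<Longrightarrow> - x \<in> Domain F" using F unfolding char_graph_def by blast+
  obtain v where "(- d1, v) \<in> F" using neg e(3) by blast
  hence "d2 + - d1 \<in> Domain F" using cl[OF e(6)] by force
  moreover have "d2 + - d1 = of_int (k1 - k2) * g" using e by (simp add: algebra_simps)
  ultimately have "(d2 + - d1, z powi (k1 - k2)) \<in> F" using compat[of "k1 - k2"] by simp
  from cl[OF e(3) this] have "(d2, w1 * z powi (k1 - k2)) \<in> F" by simp
  hence "w2 = w1 * z powi (k1 - k2)" using e(6) F unfolding char_graph_def single_valued_def by blast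
  thus "y = y'" using e \<open>z \<noteq> 0\<close> by (simp add: mult.assoc power_int_diff)
qed

lemma char_graph_adjoin_graph:
  assumes G: "add_subgroup G" and F: "char_graph G F" and "g \<in> G" "norm z = 1"
    and compat: "\<And>k. of_int k * g \<in> Domain F \<Longrightarrow> (of_int k * g, z powi k) \<in> F"
  shows "char_graph G (adjoin_graph F g z)"
  unfolding char_graph_def
proof (intro conjI ballI)
  have z: "z \<noteq> 0" using \<open>norm z = 1\<close> by auto
  show "single_valued (adjoin_graph F g z)" by (rule single_valued_adjoin_graph[OF F z compat])
  have cl: "\<And>p q. p \<in> F \<Longrightarrow> q \<in> F \<Longrightarrow> (fst p + fst q, snd p * snd q) \<in> F"
    and FG: "Domain F \<subseteq> G" and nF: "\<And>p. p \<in> F \<Longrightarrow> norm (snd p) = 1"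
    and neg: "\<And>x. x \<in> Domain F \<Longrightarrow> - x \<in> Domain F" using F unfolding char_graph_def by blast+
  show "Domain (adjoin_graph F g z) \<subseteq> G"
    using FG G add_subgroup_of_int_mult[OF G \<open>g \<in> G\<close>]
    unfolding adjoin_graph_def add_subgroup_def by blast
  show "norm (snd p) = 1" if "p \<in> adjoin_graph F g z" for p
    using that nF \<open>norm z = 1\<close> unfolding adjoin_graph_def by (force simp: norm_mult norm_power_int)
  show "(fst p + fst q, snd p * snd q) \<in> adjoin_graph F g z"
    if p: "p \<in> adjoin_graph F g z" and q: "q \<in> adjoin_graph F g z" for p q
  proof -
    obtain d1 w1 k1 where e1: "p = (d1 + of_int k1 * g, w1 * z powi k1)" "(d1, w1) \<in> F"
      using p unfolding adjoin_graph_def by blast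
    obtain d2 w2 k2 where e2: "q = (d2 + of_int k2 * g, w2 * z powi k2)" "(d2, w2) \<in> F"
      using q unfolding adjoin_graph_def by blast
    have "((d1 + d2) + of_int (k1 + k2) * g, (w1 * w2) * z powi (k1 + k2)) \<in> adjoin_graph F g z"
      using cl[OF e1(2) e2(2)] unfolding adjoin_graph_def by force
    thus ?thesis using e1 e2 z by (simp add: power_int_add algebra_simps)
  qed
  show "- x \<in> Domain (adjoin_graph F g z)" if x: "x \<in> Domain (adjoin_graph F g z)" for x
  proof -
    obtain d w k where "x = d + of_int k * g" "(d, w) \<in> F"
      using x unfolding adjoin_graph_def by blast
    moreover obtain v where "(- d, v) \<in> F" using neg \<open>(d, w) \<in> F\<close> by blast
    ultimately have "(- x, v * z powi (- k)) \<in> adjoin_graph F g z"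
      unfolding adjoin_graph_def by (force simp: algebra_simps)
    thus ?thesis by blast
  qed
qed

lemma char_graph_maximal_extension:
  assumes "add_subgroup H" "H \<subseteq> G" "is_character H ch"
  obtains M where "char_graph G M" "\<And>x. x \<in> H \<Longrightarrow> (x, ch x) \<in> M"
    "\<And>F. char_graph G F \<Longrightarrow> M \<subseteq> F \<Longrightarrow> F = M"
proof -
  define P where "P = {F. char_graph G F \<and> (\<forall>x\<in>H. (x, ch x) \<in> F)}"
  have "\<exists>M\<in>P. \<forall>F\<in>P. M \<subseteq> F \<longrightarrow> F = M"
  proof (rule Zorn_Lemma2, intro ballI)
    fix C assume C: "C \<in> chains P"
    show "\<exists>U\<in>P. \<forall>F\<in>C. F \<subseteq> U"
    proof (cases "C = {}")
      case True
      have "{(x, ch x) | x. x \<in> H} \<in> P"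
        using assms unfolding P_def char_graph_def single_valued_def add_subgroup_def
          is_character_def by auto
      thus ?thesis using True by blast
    next
      case False
      have CP: "C \<subseteq> P" and chain: "\<And>F F'. F \<in> C \<Longrightarrow> F' \<in> C \<Longrightarrow> F \<subseteq> F' \<or> F' \<subseteq> F"
        using C by (auto simp: chains_def chain_subset_def)
      have "char_graph G (\<Union>C)"
        by (rule char_graph_Union[OF False _ chain]) (use CP in \<open>auto simp: P_def\<close>)
      moreover have "\<forall>x\<in>H. (x, ch x) \<in> \<Union>C" using CP False unfolding P_def by blast
      ultimately have "\<Union>C \<in> P" unfolding P_def by blast
      thus ?thesis by blast
    qed
  qed
  then obtain M where M: "M \<in> P" and max: "\<forall>F\<in>P. M \<subseteq> F \<longrightarrow> F = M" by blast
  show ?thesis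
  proof (rule that)
    show "char_graph G M" "\<And>x. x \<in> H \<Longrightarrow> (x, ch x) \<in> M" using M by (auto simp: P_def)
    show "F = M" if "char_graph G F" "M \<subseteq> F" for F
      using max \<open>M \<in> P\<close> that unfolding P_def by blast
  qed
qed

lemma character_extension:
  assumes G: "add_subgroup G" and H: "add_subgroup H" and "H \<subseteq> G" and ch: "is_character H ch"
  obtains \<psi> where "is_character G \<psi>" "\<And>x. x \<in> H \<Longrightarrow> \<psi> x = ch x"
proof -
  obtain M where MG: "char_graph G M" and MH: "\<And>x. x \<in> H \<Longrightarrow> (x, ch x) \<in> M"
    and max: "\<And>F. char_graph G F \<Longrightarrow> M \<subseteq> F \<Longrightarrow> F = M"
    using char_graph_maximal_extension[OF H \<open>H \<subseteq> G\<close> ch] by blast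
  have nonempty: "Domain M \<noteq> {}" using MH H unfolding add_subgroup_def by blast
  note M_char = char_graph_character[OF MG nonempty]
  have "G \<subseteq> Domain M"
  proof
    fix g assume g: "g \<in> G"
    obtain z where z: "norm z = 1"
      and compat: "\<And>k. of_int k * g \<in> Domain M \<Longrightarrow> graph_fun M (of_int k * g) = z powi k"
      using is_character_cyclic_root[OF M_char] by blast
    have "(of_int k * g, z powi k) \<in> M" if "of_int k * g \<in> Domain M" for k
      using graph_fun_mem[OF that] compat[OF that] by simp
    hence "char_graph G (adjoin_graph M g z)" by (rule char_graph_adjoin_graph[OF G MG g z])
    hence "adjoin_graph M g z = M" using max subset_adjoin_graph by blast
    moreover obtain w where "(0, w) \<in> M" using M_char(1) by (auto simp: add_subgroup_def)
    hence "(0 + of_int 1 * g, w * z powi 1) \<in> adjoin_graph M g z" unfolding adjoin_graph_def by blast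
    ultimately show "g \<in> Domain M" by force
  qed
  hence "Domain M = G" using MG by (auto simp: char_graph_def)
  show ?thesis
  proof (rule that)
    show "is_character G (graph_fun M)" using M_char(2) \<open>Domain M = G\<close> by simp
    show "graph_fun M x = ch x" if "x \<in> H" for x
      using graph_fun_eq[OF _ MH[OF \<open>x \<in> H\<close>]] MG unfolding char_graph_def by blast
  qed
qed

lemma dual_group_iff: "ch \<in> dual_group A \<longleftrightarrow> is_character A ch \<and> (\<forall>x. x \<notin> A \<longrightarrow> ch x = 1)"
  by (simp add: dual_group_def is_character_def)

lemma dual_group_extend_by_one:
  assumes "add_subgroup A" "is_character A f"
  shows "(\<lambda>x. if x \<in> A then f x else 1) \<in> dual_group A"
  using assms unfolding dual_group_iff add_subgroup_def is_character_def by auto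

text \<open>With \<open>a = 1\<close> this is restriction of characters to a subgroup \<open>B \<subseteq> A\<close>.\<close>
definition dual_pullback :: "complex \<Rightarrow> complex set \<Rightarrow> (complex \<Rightarrow> complex) \<Rightarrow> complex \<Rightarrow> complex" where
  "dual_pullback a B ch = (\<lambda>x. if x \<in> B then ch (a * x) else 1)"

lemma dual_pullback_image:
  assumes A: "add_subgroup A" and B: "add_subgroup B" and "a \<noteq> 0" and aB: "\<And>x. x \<in> B \<Longrightarrow> a * x \<in> A"
  shows "dual_pullback a B ` dual_group A = dual_group B"
proof
  show "dual_pullback a B ` dual_group A \<subseteq> dual_group B"
  proof clarify
    fix ch assume "ch \<in> dual_group A"
    hence "is_character B (\<lambda>x. ch (a * x))"
      using aB unfolding dual_group_iff is_character_def by (simp add: distrib_left)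
    thus "dual_pullback a B ch \<in> dual_group B"
      unfolding dual_pullback_def by (rule dual_group_extend_by_one[OF B])
  qed
  show "dual_group B \<subseteq> dual_pullback a B ` dual_group A"
  proof
    fix \<theta> assume \<theta>: "\<theta> \<in> dual_group B"
    define H where "H = (*) a ` B"
    have H: "add_subgroup H" "H \<subseteq> A" using add_subgroup_image_mult[OF B] aB by (auto simp: H_def)
    have "is_character H (\<lambda>y. \<theta> (y / a))"
      using \<theta> \<open>a \<noteq> 0\<close> B unfolding H_def dual_group_iff is_character_def add_subgroup_def
      by (auto simp flip: distrib_left)
    then obtain \<phi> where \<phi>: "is_character A \<phi>" "\<And>y. y \<in> H \<Longrightarrow> \<phi> y = \<theta> (y / a)"
      using character_extension[OF A H] by blast
    have "dual_pullback a B (\<lambda>x. if x \<in> A then \<phi> x else 1) = \<theta>"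
      using \<phi>(2) aB \<open>a \<noteq> 0\<close> \<theta> unfolding dual_pullback_def H_def dual_group_iff by auto
    moreover have "(\<lambda>x. if x \<in> A then \<phi> x else 1) \<in> dual_group A"
      by (rule dual_group_extend_by_one[OF A \<phi>(1)])
    ultimately show "\<theta> \<in> dual_pullback a B ` dual_group A" by blast
  qed
qed

lemma continuous_on_dual_pullback: "continuous_on S (dual_pullback a B)"
  unfolding dual_pullback_def
proof (intro continuous_on_coordinatewise_then_product)
  fix x
  show "continuous_on S (\<lambda>ch. if x \<in> B then ch (a * x) else 1)"
    by (cases "x \<in> B") (auto intro: continuous_on_subset[OF continuous_on_product_coordinates])
qed

lemma dual_pullback_dual_act:
  assumes "\<And>x. u * x \<in> B \<longleftrightarrow> x \<in> B"
  shows "dual_pullback a B (dual_act u ch) = dual_act u (dual_pullback a B ch)"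
  using assms by (auto simp: dual_pullback_def dual_act_def mult.left_commute)

lemma dual_act_in_dual_group:
  assumes "\<And>x. u * x \<in> A \<longleftrightarrow> x \<in> A" "ch \<in> dual_group A"
  shows "dual_act u ch \<in> dual_group A"
  using assms unfolding dual_group_def dual_act_def by (simp add: distrib_left)

lemma ID_property_image:
  assumes f: "continuous_map X Y f" and img: "f ` topspace X = topspace Y"
    and inv: "\<And>g y. g \<in> G \<Longrightarrow> y \<in> topspace X \<Longrightarrow> act g y \<in> topspace X"
    and equiv: "\<And>g y. g \<in> G \<Longrightarrow> y \<in> topspace X \<Longrightarrow> f (act g y) = act' g (f y)"
    and ID: "ID_property X G act"
  shows "ID_property Y G act'"
  unfolding ID_property_def
proof (intro allI impI, elim conjE)
  fix S assume S: "closedin Y S" "infinite S" "\<forall>g\<in>G. \<forall>x\<in>S. act' g x \<in> S"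
  define T where "T = {y \<in> topspace X. f y \<in> S}"
  have "closedin X T" unfolding T_def by (rule closedin_continuous_map_preimage[OF f S(1)])
  moreover have "\<forall>g\<in>G. \<forall>y\<in>T. act g y \<in> T" using inv equiv S(3) by (simp add: T_def)
  moreover have "f ` T = S"
  proof
    show "f ` T \<subseteq> S" by (auto simp: T_def)
    show "S \<subseteq> f ` T"
    proof
      fix s assume "s \<in> S"
      then obtain y where "y \<in> topspace X" "s = f y" using img closedin_subset[OF S(1)] by blast
      thus "s \<in> f ` T" using \<open>s \<in> S\<close> by (auto simp: T_def)
    qed
  qed
  hence "infinite T" using S(2) by blast
  ultimately have "T = topspace X" using ID unfolding ID_property_def by blast
  thus "S = topspace Y" using \<open>f ` T = S\<close> img by simp
qed

lemma ID_property_dual_pullback: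
  assumes "add_subgroup A" "add_subgroup B" "a \<noteq> 0" "\<And>x. x \<in> B \<Longrightarrow> a * x \<in> A"
    and "\<And>u x. u \<in> U \<Longrightarrow> u * x \<in> A \<longleftrightarrow> x \<in> A" "\<And>u x. u \<in> U \<Longrightarrow> u * x \<in> B \<longleftrightarrow> x \<in> B"
    and "ID_property (top_of_set (dual_group A)) U dual_act"
  shows "ID_property (top_of_set (dual_group B)) U dual_act"
proof (rule ID_property_image)
  show "continuous_map (top_of_set (dual_group A)) (top_of_set (dual_group B)) (dual_pullback a B)"
    using dual_pullback_image[OF assms(1-4)]
    by (auto intro: continuous_map_into_subtopology simp: continuous_on_dual_pullback)
qed (use assms dual_pullback_image dual_act_in_dual_group dual_pullback_dual_act in auto)

lemma is_ideal_add_subgroup: "is_ideal R J \<Longrightarrow> add_subgroup J"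
  by (simp add: is_ideal_def add_subgroup_def)

lemma is_ideal_ring_of_integers:
  assumes "number_field K"
  shows "is_ideal (ring_of_integers K) (ring_of_integers K)"
  using assms algebraic_int_add algebraic_int_mult
  unfolding is_ideal_def number_field_def ring_of_integers_def by auto

lemma int_units_mult_mem_iff:
  assumes "is_ideal (ring_of_integers K) A" "u \<in> int_units K"
  shows "u * x \<in> A \<longleftrightarrow> x \<in> A"
proof -
  obtain v where "v \<in> ring_of_integers K" "u \<in> ring_of_integers K" "u * v = 1"
    using assms(2) by (auto simp: int_units_def)
  moreover have "x = v * (u * x)" using \<open>u * v = 1\<close> by (simp add: mult_ac)
  ultimately show ?thesis using assms(1) unfolding is_ideal_def by metis
qed

theorem proposition4p2:
  fixes K J :: "complex set"
  assumes "number_field K"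
    and "is_ideal (ring_of_integers K) J"
    and "J \<noteq> {0}"
  shows "ID_property (subtopology euclidean (dual_group J)) (int_units K) dual_act
     \<longleftrightarrow> ID_property (subtopology euclidean (dual_group (ring_of_integers K)))
            (int_units K) dual_act"
proof -
  let ?R = "ring_of_integers K"
  have R: "is_ideal ?R ?R" by (rule is_ideal_ring_of_integers[OF assms(1)])
  obtain a where a: "a \<in> J" "a \<noteq> 0" using assms(2,3) by (auto simp: is_ideal_def)
  have aR: "a * x \<in> J" if "x \<in> ?R" for x
    using assms(2) a(1) that unfolding is_ideal_def by (metis mult.commute)
  have JR: "1 * x \<in> ?R" if "x \<in> J" for x using assms(2) that by (auto simp: is_ideal_def)
  note stable = int_units_mult_mem_iff[OF assms(2)] int_units_mult_mem_iff[OF R]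
  note subgroups = is_ideal_add_subgroup[OF assms(2)] is_ideal_add_subgroup[OF R]
  show ?thesis
    using ID_property_dual_pullback[OF subgroups(1,2) a(2) aR stable]
      ID_property_dual_pullback[OF subgroups(2,1) one_neq_zero JR stable(2,1)] by blast
qed

end
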